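(* Let $B$ be a locally compact Hausdorff space, let $(X,r)$ be a $B$-space, let $(X',r')$ be a $B$-space with $X'$ Hausdorff and $r'$ proper, let $f\colon X\to X'$ be a $B$-map, and let $f'\colon\beta_BX\to X'$ be the unique continuous map with $f'\circ i=f$. Then $r'\circ f'=\beta_Br$.
   Context: A $B$-space is a space $Z$ with continuous $r\colon Z\to B$; a $B$-map is a continuous map commuting with the anchor maps. For a $B$-space $(X,r)$, $H_X\subseteq\mathrm{C_b}(X)$ is the closed linear span of products $g\cdot(h\circ r)$, $g\in\mathrm{C_b}(X)$, $h\in\mathrm C_0(B)$; $\beta_BX$ is the spectrum of the commutative C*-algebra $H_X$; $i\colon X\to\beta_BX$ sends $x$ to evaluation at $x$; $\beta_Br\colon\beta_BX\to B$ is the unique continuous map with $\beta_Br\circ i=r$ (it exists and is proper). The map $f'$ exists and is unique. *)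

theory Defs
  imports "HOL-Analysis.Analysis"
begin

text \<open>Complex-valued functions on a space X are represented as total functions
  that vanish outside topspace X (so that distinct elements of C_b(X) are distinct HOL functions).\<close>

definition Cb :: "'a topology \<Rightarrow> ('a \<Rightarrow> complex) set" where
  "Cb X = {g. continuous_map X euclidean g \<and> bounded (g ` topspace X)
              \<and> (\<forall>x. x \<notin> topspace X \<longrightarrow> g x = 0)}"

definition C0 :: "'b topology \<Rightarrow> ('b \<Rightarrow> complex) set" where
  "C0 B = {h. continuous_map B euclidean h
              \<and> (\<forall>e>0. \<exists>K. compactin B K \<and> (\<forall>y\<in>topspace B - K. norm (h y) < e))
              \<and> (\<forall>y. y \<notin> topspace B \<longrightarrow> h y = 0)}"

text \<open>Linear span of the products g * (h o r); scalars are absorbed into g \<in> C_b(X).\<close>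
definition HX_span :: "'b topology \<Rightarrow> 'a topology \<Rightarrow> ('a \<Rightarrow> 'b) \<Rightarrow> ('a \<Rightarrow> complex) set" where
  "HX_span B X r = {p. \<exists>(n::nat) g h. (\<forall>i<n. g i \<in> Cb X \<and> h i \<in> C0 B)
                          \<and> p = (\<lambda>x. \<Sum>i<n. g i x * h i (r x)) }"

definition HX :: "'b topology \<Rightarrow> 'a topology \<Rightarrow> ('a \<Rightarrow> 'b) \<Rightarrow> ('a \<Rightarrow> complex) set" where
  "HX B X r = {g \<in> Cb X. \<forall>e>0. \<exists>p\<in>HX_span B X r. \<forall>x\<in>topspace X. norm (g x - p x) < e}"

definition characters :: "('a \<Rightarrow> complex) set \<Rightarrow> (('a \<Rightarrow> complex) \<Rightarrow> complex) set" where
  "characters H = {\<phi>. \<phi> \<in> extensional H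
     \<and> (\<forall>g\<in>H. \<forall>h\<in>H. \<phi> (\<lambda>x. g x + h x) = \<phi> g + \<phi> h)
     \<and> (\<forall>g\<in>H. \<forall>c. \<phi> (\<lambda>x. c * g x) = c * \<phi> g)
     \<and> (\<forall>g\<in>H. \<forall>h\<in>H. \<phi> (\<lambda>x. g x * h x) = \<phi> g * \<phi> h)
     \<and> (\<exists>g\<in>H. \<phi> g \<noteq> 0)}"

definition betaB :: "'b topology \<Rightarrow> 'a topology \<Rightarrow> ('a \<Rightarrow> 'b)
                     \<Rightarrow> (('a \<Rightarrow> complex) \<Rightarrow> complex) topology" where
  "betaB B X r = subtopology (product_topology (\<lambda>_. euclidean) (HX B X r)) (characters (HX B X r))"

definition beta_i :: "'b topology \<Rightarrow> 'a topology \<Rightarrow> ('a \<Rightarrow> 'b) \<Rightarrow> 'a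
                      \<Rightarrow> (('a \<Rightarrow> complex) \<Rightarrow> complex)" where
  "beta_i B X r x = restrict (\<lambda>g. g x) (HX B X r)"

end

theory Submission
  imports Defs
begin

(* The maps r' o f' and beta_B r are continuous into the Hausdorff space B and agree on i(X),
   since r' o f' o i = r' o f = r = beta_B r o i; so they agree on the closure of i(X), which is
   all of beta_B X.

   Density holds for the spectrum of any ideal H of C_b(X). A character phi takes each e in H to
   a point of the closure of e(X): otherwise e - phi(e) is invertible in C_b(X), and phi would
   vanish on H. Given g_1, ..., g_n in H, pick g_0 in H with phi(g_0) = 1; then the functions
   g_0 (g_j - phi(g_j)), and hence s = sum_j |g_0 (g_j - phi(g_j))|^2, lie in ker phi. The function
   e = g_0 / (1 + N s) still has phi(e) = 1, so |e(x) - 1| < 1/2 at some x; there |g_0(x)| > 1/2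
   while N s(x) is bounded by 2 sup |g_0|, so every |g_j(x) - phi(g_j)| is small once N is large. *)

lemma continuous_map_mult:
  fixes f g :: "'a \<Rightarrow> 'b::real_normed_algebra"
  shows "\<lbrakk>continuous_map X euclidean f; continuous_map X euclidean g\<rbrakk>
    \<Longrightarrow> continuous_map X euclidean (\<lambda>x. f x * g x)"
  by (simp add: continuous_map_atin tendsto_mult)

lemma continuous_map_inverse:
  fixes f :: "'a \<Rightarrow> 'b::real_normed_div_algebra"
  shows "\<lbrakk>continuous_map X euclidean f; \<And>x. x \<in> topspace X \<Longrightarrow> f x \<noteq> 0\<rbrakk>
    \<Longrightarrow> continuous_map X euclidean (\<lambda>x. inverse (f x))"
  by (simp add: continuous_map_atin tendsto_inverse)

lemma continuous_map_cnj:
  "continuous_map X euclidean f \<Longrightarrow> continuous_map X euclidean (\<lambda>x. cnj (f x))"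
  by (simp add: continuous_map_atin tendsto_cnj)

lemma sum_lessThan_add:
  fixes f :: "nat \<Rightarrow> 'a::comm_monoid_add"
  shows "(\<Sum>i<n + m. f i) = (\<Sum>i<n. f i) + (\<Sum>i<m. f (n + i))"
  by (induction m) (simp_all add: add.assoc)

lemma CbI:
  assumes "continuous_map X euclidean g" and "\<forall>x\<in>topspace X. norm (g x) \<le> M"
    and "\<forall>x. x \<notin> topspace X \<longrightarrow> g x = 0"
  shows "g \<in> Cb X"
  using assms unfolding Cb_def by (auto simp: bounded_iff)

lemma Cb_continuous_map: "g \<in> Cb X \<Longrightarrow> continuous_map X euclidean g"
  unfolding Cb_def by auto

lemma Cb_outside: "g \<in> Cb X \<Longrightarrow> x \<notin> topspace X \<Longrightarrow> g x = 0"
  unfolding Cb_def by auto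

lemma Cb_bounded:
  assumes "g \<in> Cb X"
  shows "\<exists>M>0. \<forall>x. norm (g x) \<le> M"
proof -
  obtain a where a: "\<forall>x\<in>topspace X. norm (g x) \<le> a"
    using assms unfolding Cb_def bounded_iff by blast
  have "norm (g x) \<le> max a 1" for x
    using a Cb_outside[OF assms, of x] by (cases "x \<in> topspace X") auto
  then show ?thesis
    by (intro exI[of _ "max a 1"]) auto
qed

lemma Cb_add:
  assumes "g \<in> Cb X" and "k \<in> Cb X"
  shows "(\<lambda>x. g x + k x) \<in> Cb X"
proof -
  obtain M1 M2 where "\<And>x. norm (g x) \<le> M1" and "\<And>x. norm (k x) \<le> M2"
    using Cb_bounded[OF assms(1)] Cb_bounded[OF assms(2)] by blast
  then have bound: "\<forall>x\<in>topspace X. norm (g x + k x) \<le> M1 + M2"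
    by (metis add_mono norm_triangle_le)
  have "continuous_map X euclidean (\<lambda>x. g x + k x)"
    using assms by (intro continuous_map_add Cb_continuous_map)
  then show ?thesis
    by (rule CbI[OF _ bound]) (simp add: Cb_outside[OF assms(1)] Cb_outside[OF assms(2)])
qed

lemma Cb_mult:
  assumes "g \<in> Cb X" and "k \<in> Cb X"
  shows "(\<lambda>x. g x * k x) \<in> Cb X"
proof -
  obtain M1 M2 where M1: "M1 > 0" "\<And>x. norm (g x) \<le> M1" and M2: "\<And>x. norm (k x) \<le> M2"
    using Cb_bounded[OF assms(1)] Cb_bounded[OF assms(2)] by blast
  have "norm (g x) * norm (k x) \<le> M1 * M2" for x
    using M1 M2 by (intro mult_mono) auto
  then have bound: "\<forall>x\<in>topspace X. norm (g x * k x) \<le> M1 * M2"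
    by (simp add: norm_mult)
  have "continuous_map X euclidean (\<lambda>x. g x * k x)"
    using assms by (intro continuous_map_mult Cb_continuous_map)
  then show ?thesis
    by (rule CbI[OF _ bound]) (simp add: Cb_outside[OF assms(1)])
qed

lemma Cb_cnj:
  assumes "g \<in> Cb X"
  shows "(\<lambda>x. cnj (g x)) \<in> Cb X"
proof -
  obtain M where "\<And>x. norm (g x) \<le> M"
    using Cb_bounded[OF assms] by blast
  then have bound: "\<forall>x\<in>topspace X. norm (cnj (g x)) \<le> M"
    by simp
  have "continuous_map X euclidean (\<lambda>x. cnj (g x))"
    using assms by (intro continuous_map_cnj Cb_continuous_map)
  then show ?thesis
    by (rule CbI[OF _ bound]) (simp add: Cb_outside[OF assms])
qed

lemma Cb_const: "(\<lambda>x. if x \<in> topspace X then c else 0) \<in> Cb X"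
proof (rule CbI)
  show "continuous_map X euclidean (\<lambda>x. if x \<in> topspace X then c else 0)"
    by (rule continuous_map_eq[of _ _ "\<lambda>x. c"]) simp_all
qed (auto intro: order_refl)

lemma Cb_inverse:
  assumes "continuous_map X euclidean q" and "d > 0" and "\<forall>x\<in>topspace X. d \<le> norm (q x)"
  shows "(\<lambda>x. if x \<in> topspace X then inverse (q x) else 0) \<in> Cb X"
proof (rule CbI)
  have "\<And>x. x \<in> topspace X \<Longrightarrow> q x \<noteq> 0"
    using assms by force
  then show "continuous_map X euclidean (\<lambda>x. if x \<in> topspace X then inverse (q x) else 0)"
    by (intro continuous_map_eq[OF continuous_map_inverse[OF assms(1)]]) auto
  show "\<forall>x\<in>topspace X. norm (if x \<in> topspace X then inverse (q x) else 0) \<le> inverse d"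
    using assms by (auto simp: norm_inverse intro!: le_imp_inverse_le)
qed auto

definition Cb_ideal :: "'a topology \<Rightarrow> ('a \<Rightarrow> complex) set \<Rightarrow> bool" where
  "Cb_ideal X H \<longleftrightarrow> H \<subseteq> Cb X \<and> (\<forall>g\<in>H. \<forall>k\<in>H. (\<lambda>x. g x + k x) \<in> H)
                    \<and> (\<forall>g\<in>H. \<forall>k\<in>Cb X. (\<lambda>x. g x * k x) \<in> H)"

lemma Cb_ideal_Cb: "Cb_ideal X H \<Longrightarrow> g \<in> H \<Longrightarrow> g \<in> Cb X"
  unfolding Cb_ideal_def by blast

lemma Cb_ideal_add: "Cb_ideal X H \<Longrightarrow> g \<in> H \<Longrightarrow> k \<in> H \<Longrightarrow> (\<lambda>x. g x + k x) \<in> H"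
  unfolding Cb_ideal_def by blast

lemma Cb_ideal_mult_Cb: "Cb_ideal X H \<Longrightarrow> g \<in> H \<Longrightarrow> k \<in> Cb X \<Longrightarrow> (\<lambda>x. g x * k x) \<in> H"
  unfolding Cb_ideal_def by blast

lemma Cb_ideal_mult: "Cb_ideal X H \<Longrightarrow> g \<in> H \<Longrightarrow> k \<in> H \<Longrightarrow> (\<lambda>x. g x * k x) \<in> H"
  unfolding Cb_ideal_def by blast

lemma Cb_ideal_scale:
  assumes "Cb_ideal X H" and "g \<in> H"
  shows "(\<lambda>x. c * g x) \<in> H"
proof -
  have "(\<lambda>x. c * g x) = (\<lambda>x. g x * (if x \<in> topspace X then c else 0))"
    using Cb_outside[OF Cb_ideal_Cb[OF assms]] by auto
  then show ?thesis
    using Cb_ideal_mult_Cb[OF assms Cb_const] by simp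
qed

lemma character_add: "\<phi> \<in> characters H \<Longrightarrow> g \<in> H \<Longrightarrow> k \<in> H \<Longrightarrow> \<phi> (\<lambda>x. g x + k x) = \<phi> g + \<phi> k"
  unfolding characters_def by blast

lemma character_scale: "\<phi> \<in> characters H \<Longrightarrow> g \<in> H \<Longrightarrow> \<phi> (\<lambda>x. c * g x) = c * \<phi> g"
  unfolding characters_def by blast

lemma character_mult: "\<phi> \<in> characters H \<Longrightarrow> g \<in> H \<Longrightarrow> k \<in> H \<Longrightarrow> \<phi> (\<lambda>x. g x * k x) = \<phi> g * \<phi> k"
  unfolding characters_def by blast

lemma character_eq_1E:
  assumes "Cb_ideal X H" and "\<phi> \<in> characters H"
  obtains g where "g \<in> H" and "\<phi> g = 1"
proof -
  obtain g where "g \<in> H" and "\<phi> g \<noteq> 0"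
    using assms(2) unfolding characters_def by blast
  then show thesis
    using that[of "\<lambda>x. inverse (\<phi> g) * g x"] Cb_ideal_scale[OF assms(1)] character_scale[OF assms(2)]
    by simp
qed

lemma character_kernel_mult_Cb:
  assumes H: "Cb_ideal X H" and \<phi>: "\<phi> \<in> characters H"
    and a: "a \<in> H" "\<phi> a = 0" and k: "k \<in> Cb X"
  shows "\<phi> (\<lambda>x. a x * k x) = 0"
proof -
  obtain g where g: "g \<in> H" "\<phi> g = 1"
    using character_eq_1E[OF H \<phi>] by blast
  have ak: "(\<lambda>x. a x * k x) \<in> H"
    using assms by (simp add: Cb_ideal_mult_Cb)
  have "\<phi> (\<lambda>x. a x * k x) = \<phi> (\<lambda>x. a x * k x) * \<phi> g"
    using g by simp
  also have "\<dots> = \<phi> (\<lambda>x. a x * k x * g x)"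
    using character_mult[OF \<phi> ak g(1)] by simp
  also have "\<dots> = \<phi> (\<lambda>x. a x * (g x * k x))"
    by (simp add: mult_ac)
  also have "\<dots> = 0"
    using character_mult[OF \<phi> a(1) Cb_ideal_mult_Cb[OF H g(1) k]] a(2) by simp
  finally show ?thesis .
qed

lemma character_kernel_sum:
  assumes H: "Cb_ideal X H" and \<phi>: "\<phi> \<in> characters H" and "finite K"
    and "\<forall>i\<in>K. b i \<in> H \<and> \<phi> (b i) = 0"
  shows "(\<lambda>x. \<Sum>i\<in>K. b i x) \<in> H \<and> \<phi> (\<lambda>x. \<Sum>i\<in>K. b i x) = 0"
  using assms(3,4)
proof (induction K rule: finite_induct)
  case empty
  obtain g where "g \<in> H" and "\<phi> g = 1"
    using character_eq_1E[OF H \<phi>] by blast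
  then show ?case
    using Cb_ideal_scale[OF H, of g 0] character_scale[OF \<phi>, of g 0] by simp
next
  case (insert i K)
  let ?s = "\<lambda>x. \<Sum>j\<in>K. b j x"
  have "b i \<in> H" "\<phi> (b i) = 0" "?s \<in> H" "\<phi> ?s = 0"
    using insert by auto
  then show ?case
    using Cb_ideal_add[OF H, of "b i" ?s] character_add[OF \<phi>, of "b i" ?s] insert(1,2) by simp
qed

lemma character_kernel_sum_norm_sq:
  assumes H: "Cb_ideal X H" and \<phi>: "\<phi> \<in> characters H" and "finite K"
    and a: "\<forall>i\<in>K. a i \<in> H \<and> \<phi> (a i) = 0"
  shows "(\<lambda>x. complex_of_real (\<Sum>i\<in>K. (norm (a i x))\<^sup>2)) \<in> H
    \<and> \<phi> (\<lambda>x. complex_of_real (\<Sum>i\<in>K. (norm (a i x))\<^sup>2)) = 0"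
proof -
  have "\<forall>i\<in>K. (\<lambda>x. a i x * cnj (a i x)) \<in> H \<and> \<phi> (\<lambda>x. a i x * cnj (a i x)) = 0"
    using a Cb_ideal_mult_Cb[OF H] character_kernel_mult_Cb[OF H \<phi>] Cb_cnj Cb_ideal_Cb[OF H]
    by blast
  then show ?thesis
    using character_kernel_sum[OF H \<phi> \<open>finite K\<close>, of "\<lambda>i x. a i x * cnj (a i x)"]
    by (simp only: of_real_sum complex_norm_square)
qed

lemma evaluation_in_characters:
  assumes "Cb_ideal X H" and "g \<in> H" and "g x \<noteq> 0"
  shows "restrict (\<lambda>g. g x) H \<in> characters H"
  unfolding characters_def using assms by (auto simp: Cb_ideal_add Cb_ideal_scale Cb_ideal_mult)

lemma character_value_in_closure_range:
  assumes H: "Cb_ideal X H" and \<phi>: "\<phi> \<in> characters H" and e: "e \<in> H"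
  shows "\<phi> e \<in> closure (e ` topspace X)"
proof (rule ccontr)
  assume "\<phi> e \<notin> closure (e ` topspace X)"
  then obtain d where d: "d > 0" "\<forall>x\<in>topspace X. d \<le> norm (e x - \<phi> e)"
    unfolding closure_approachable by (auto simp: dist_norm not_less)
  define k where "k x = (if x \<in> topspace X then inverse (e x - \<phi> e) else 0)" for x
  have k: "k \<in> Cb X"
    unfolding k_def using d Cb_continuous_map[OF Cb_ideal_Cb[OF H e]]
    by (intro Cb_inverse continuous_map_diff) auto
  obtain g where g: "g \<in> H" "\<phi> g = 1"
    using character_eq_1E[OF H \<phi>] by blast
  define w where "w x = g x * k x" for x
  have w: "w \<in> H"
    unfolding w_def using Cb_ideal_mult_Cb[OF H g(1) k] .
  have g_eq: "g = (\<lambda>x. e x * w x + (- \<phi> e) * w x)"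
  proof
    fix x
    show "g x = e x * w x + (- \<phi> e) * w x"
    proof (cases "x \<in> topspace X")
      case True
      then have "e x - \<phi> e \<noteq> 0"
        using d by force
      moreover have "e x * w x + (- \<phi> e) * w x = (e x - \<phi> e) * inverse (e x - \<phi> e) * g x"
        using True by (simp add: w_def k_def algebra_simps)
      ultimately show ?thesis
        by simp
    qed (simp add: w_def k_def Cb_outside[OF Cb_ideal_Cb[OF H g(1)]])
  qed
  have "\<phi> g = \<phi> (\<lambda>x. e x * w x) + \<phi> (\<lambda>x. (- \<phi> e) * w x)"
    unfolding g_eq by (rule character_add[OF \<phi> Cb_ideal_mult[OF H e w] Cb_ideal_scale[OF H w]])
  also have "\<dots> = \<phi> e * \<phi> w + (- \<phi> e) * \<phi> w"
    by (simp only: character_mult[OF \<phi> e w] character_scale[OF \<phi> w])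
  finally show False
    using g by simp
qed

lemma character_divide_one_plus_kernel:
  assumes H: "Cb_ideal X H" and \<phi>: "\<phi> \<in> characters H" and g: "g \<in> H"
    and s: "\<And>x. 0 \<le> s x" "(\<lambda>x. complex_of_real (s x)) \<in> H" "\<phi> (\<lambda>x. complex_of_real (s x)) = 0"
  shows "(\<lambda>x. g x / complex_of_real (1 + s x)) \<in> H"
    and "\<phi> (\<lambda>x. g x / complex_of_real (1 + s x)) = \<phi> g"
proof -
  let ?t = "\<lambda>x. complex_of_real (s x)" and ?e = "\<lambda>x. g x / complex_of_real (1 + s x)"
  have nonzero: "complex_of_real (1 + s x) \<noteq> 0" for x
    using s(1)[of x] by (simp only: of_real_eq_0_iff)
  define k where "k x = (if x \<in> topspace X then inverse (1 + ?t x) else 0)" for x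
  have "continuous_map X euclidean (\<lambda>x. 1 + ?t x)"
    using Cb_continuous_map[OF Cb_ideal_Cb[OF H s(2)]] by (intro continuous_map_add) auto
  moreover have "1 \<le> norm (1 + ?t x)" for x
  proof -
    have "norm (1 + ?t x) = norm (complex_of_real (1 + s x))"
      by simp
    also have "\<dots> = 1 + s x"
      unfolding norm_of_real using s(1)[of x] by simp
    finally show ?thesis
      using s(1)[of x] by simp
  qed
  ultimately have k: "k \<in> Cb X"
    unfolding k_def by (intro Cb_inverse[where d=1]) auto
  have "?e = (\<lambda>x. g x * k x)"
    using Cb_outside[OF Cb_ideal_Cb[OF H g]] by (auto simp: k_def fun_eq_iff divide_inverse)
  then show e: "?e \<in> H"
    using Cb_ideal_mult_Cb[OF H g k] by simp
  have "g = (\<lambda>x. ?e x + ?e x * ?t x)"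
  proof
    fix x
    have "?e x + ?e x * ?t x = ?e x * complex_of_real (1 + s x)"
      by (simp add: distrib_left)
    then show "g x = ?e x + ?e x * ?t x"
      using nonzero[of x] by simp
  qed
  then have "\<phi> g = \<phi> ?e + \<phi> ?e * \<phi> ?t"
    using character_add[OF \<phi> e Cb_ideal_mult[OF H e s(2)]] character_mult[OF \<phi> e s(2)] by simp
  then show "\<phi> ?e = \<phi> g"
    using s(3) by simp
qed

lemma character_kernel_small_point:
  assumes H: "Cb_ideal X H" and \<phi>: "\<phi> \<in> characters H"
    and g0: "g0 \<in> H" "\<phi> g0 = 1"
    and s: "\<And>x. 0 \<le> s x" "(\<lambda>x. complex_of_real (s x)) \<in> H" "\<phi> (\<lambda>x. complex_of_real (s x)) = 0"
    and "\<delta> > 0"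
  shows "\<exists>x\<in>topspace X. 1/2 < norm (g0 x) \<and> s x < \<delta>"
proof -
  obtain M where M: "M > 0" "\<And>x. norm (g0 x) \<le> M"
    using Cb_bounded[OF Cb_ideal_Cb[OF H g0(1)]] by blast
  define N where "N = 2 * M / \<delta>"
  have N: "N > 0"
    unfolding N_def using M \<open>\<delta> > 0\<close> by simp
  have Ns_eq: "(\<lambda>x. complex_of_real (N * s x)) = (\<lambda>x. of_real N * complex_of_real (s x))"
    by simp
  have Ns: "\<And>x. 0 \<le> N * s x" "(\<lambda>x. complex_of_real (N * s x)) \<in> H"
    "\<phi> (\<lambda>x. complex_of_real (N * s x)) = 0"
    using N s(1) Cb_ideal_scale[OF H s(2)] character_scale[OF \<phi> s(2)] s(3)
    unfolding Ns_eq by simp_all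
  define e where "e x = g0 x / complex_of_real (1 + N * s x)" for x
  have e: "e \<in> H" "\<phi> e = 1"
    unfolding e_def using character_divide_one_plus_kernel[OF H \<phi> g0(1) Ns] g0(2) by simp_all
  then have "1 \<in> closure (e ` topspace X)"
    using character_value_in_closure_range[OF H \<phi> e(1)] by simp
  then have "\<exists>y\<in>e ` topspace X. dist y 1 < 1/2"
    unfolding closure_approachable by (meson half_gt_zero zero_less_one)
  then obtain x where x: "x \<in> topspace X" "dist (e x) 1 < 1/2"
    by blast
  then have ex: "1/2 < norm (e x)"
    using norm_triangle_ineq2[of 1 "e x"] by (simp add: dist_norm norm_minus_commute)
  have q_ge_1: "1 \<le> 1 + N * s x"
    using Ns(1)[of x] by simp
  have "norm (e x) = norm (g0 x) / (1 + N * s x)"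
    unfolding e_def norm_divide norm_of_real using q_ge_1 by simp
  then have g0x: "norm (g0 x) = norm (e x) * (1 + N * s x)"
    using q_ge_1 by simp
  have "norm (e x) \<le> norm (g0 x)"
    using mult_left_mono[OF q_ge_1 norm_ge_zero[of "e x"]] g0x by simp
  then have "1/2 < norm (g0 x)"
    using ex by simp
  have "1/2 * (1 + N * s x) < norm (g0 x)"
    using g0x ex q_ge_1 by simp
  then have "N * s x < N * \<delta>"
    using M(2)[of x] \<open>\<delta> > 0\<close> by (simp add: N_def)
  then have "s x < \<delta>"
    using N by simp
  with x(1) \<open>1/2 < norm (g0 x)\<close> show ?thesis
    by blast
qed

lemma character_kernel_shift:
  assumes H: "Cb_ideal X H" and \<phi>: "\<phi> \<in> characters H"
    and g0: "g0 \<in> H" "\<phi> g0 = 1" and g: "g \<in> H"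
  shows "(\<lambda>x. g0 x * (g x - \<phi> g)) \<in> H \<and> \<phi> (\<lambda>x. g0 x * (g x - \<phi> g)) = 0"
proof -
  have eq: "(\<lambda>x. g0 x * (g x - \<phi> g)) = (\<lambda>x. g0 x * g x + (- \<phi> g) * g0 x)"
    by (simp add: algebra_simps)
  have "(\<lambda>x. g0 x * g x + (- \<phi> g) * g0 x) \<in> H"
    by (intro Cb_ideal_add[OF H] Cb_ideal_mult[OF H g0(1) g] Cb_ideal_scale[OF H g0(1)])
  moreover have "\<phi> (\<lambda>x. g0 x * g x + (- \<phi> g) * g0 x) = \<phi> g0 * \<phi> g + (- \<phi> g) * \<phi> g0"
    by (simp only: character_add[OF \<phi> Cb_ideal_mult[OF H g0(1) g] Cb_ideal_scale[OF H g0(1)]]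
        character_mult[OF \<phi> g0(1) g] character_scale[OF \<phi> g0(1)])
  ultimately show ?thesis
    unfolding eq using g0(2) by simp
qed

lemma character_approx_by_point:
  assumes H: "Cb_ideal X H" and \<phi>: "\<phi> \<in> characters H"
    and F: "finite F" "F \<subseteq> H" and "\<epsilon> > 0"
  shows "\<exists>x\<in>topspace X. (\<forall>g\<in>F. norm (g x - \<phi> g) < \<epsilon>) \<and> (\<exists>g\<in>H. g x \<noteq> 0)"
proof -
  obtain g0 where g0: "g0 \<in> H" "\<phi> g0 = 1"
    using character_eq_1E[OF H \<phi>] by blast
  define s where "s x = (\<Sum>g\<in>F. (norm (g0 x * (g x - \<phi> g)))\<^sup>2)" for x
  have s_nonneg: "0 \<le> s x" for x
    unfolding s_def by (simp add: sum_nonneg)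
  have "\<forall>g\<in>F. (\<lambda>x. g0 x * (g x - \<phi> g)) \<in> H \<and> \<phi> (\<lambda>x. g0 x * (g x - \<phi> g)) = 0"
  proof
    fix g assume "g \<in> F"
    with F(2) have "g \<in> H"
      by blast
    from character_kernel_shift[OF H \<phi> g0 this]
    show "(\<lambda>x. g0 x * (g x - \<phi> g)) \<in> H \<and> \<phi> (\<lambda>x. g0 x * (g x - \<phi> g)) = 0" .
  qed
  then have s_kernel: "(\<lambda>x. complex_of_real (s x)) \<in> H \<and> \<phi> (\<lambda>x. complex_of_real (s x)) = 0"
    unfolding s_def by (rule character_kernel_sum_norm_sq[OF H \<phi> F(1)])
  have "(\<epsilon>/2)\<^sup>2 > 0"
    using \<open>\<epsilon> > 0\<close> by simp
  then obtain x where x: "x \<in> topspace X" "1/2 < norm (g0 x)" "s x < (\<epsilon>/2)\<^sup>2"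
    using character_kernel_small_point[OF H \<phi> g0 s_nonneg s_kernel[THEN conjunct1] s_kernel[THEN conjunct2]]
    by blast
  have "norm (g x - \<phi> g) < \<epsilon>" if "g \<in> F" for g
  proof -
    have "(norm (g0 x * (g x - \<phi> g)))\<^sup>2 \<le> s x"
      unfolding s_def by (rule member_le_sum) (simp_all add: that F(1))
    then have "(norm (g0 x * (g x - \<phi> g)))\<^sup>2 < (\<epsilon>/2)\<^sup>2"
      using x(3) by linarith
    then have "norm (g0 x) * norm (g x - \<phi> g) < \<epsilon>/2"
      unfolding norm_mult by (rule power_less_imp_less_base) (use \<open>\<epsilon> > 0\<close> in simp)
    then have "1/2 * norm (g x - \<phi> g) < \<epsilon>/2"
      using x(2) mult_right_mono[of "1/2" "norm (g0 x)" "norm (g x - \<phi> g)"] by simp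
    then show ?thesis
      by simp
  qed
  moreover have "g0 x \<noteq> 0"
    using x(2) by auto
  ultimately show ?thesis
    using x(1) g0(1) by blast
qed

lemma openin_product_euclidean_finite_dist:
  fixes \<phi> :: "'i \<Rightarrow> 'b::metric_space"
  assumes "openin (product_topology (\<lambda>_. euclidean) I) T" and "\<phi> \<in> T"
  obtains F \<epsilon> where "finite F" "F \<subseteq> I" "\<epsilon> > 0"
    "\<And>\<psi>. \<psi> \<in> extensional I \<Longrightarrow> \<forall>i\<in>F. dist (\<psi> i) (\<phi> i) < \<epsilon> \<Longrightarrow> \<psi> \<in> T"
proof -
  obtain U where U_finite: "finite {i \<in> I. U i \<noteq> UNIV}" and U_open: "\<forall>i\<in>I. open (U i)"
    and \<phi>U: "\<phi> \<in> Pi\<^sub>E I U" and UT: "Pi\<^sub>E I U \<subseteq> T"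
    using assms unfolding openin_product_topology_alt by auto
  define F where "F = {i \<in> I. U i \<noteq> UNIV}"
  have "\<exists>d>0. ball (\<phi> i) d \<subseteq> U i" if "i \<in> F" for i
    using that U_open \<phi>U open_contains_ball unfolding F_def PiE_iff by blast
  then obtain d where d: "\<And>i. i \<in> F \<Longrightarrow> d i > 0 \<and> ball (\<phi> i) (d i) \<subseteq> U i"
    by metis
  define \<epsilon> where "\<epsilon> = Min (insert 1 (d ` F))"
  have "finite F"
    using U_finite unfolding F_def .
  then have "\<epsilon> > 0"
    unfolding \<epsilon>_def using d by (subst Min_gr_iff) auto
  have \<epsilon>_le: "\<epsilon> \<le> d i" if "i \<in> F" for i
    unfolding \<epsilon>_def using \<open>finite F\<close> that by (intro Min_le) auto
  show thesis
  proof (rule that[OF \<open>finite F\<close> _ \<open>\<epsilon> > 0\<close>])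
    show "F \<subseteq> I"
      unfolding F_def by blast
  next
    fix \<psi> assume "\<psi> \<in> extensional I" and close: "\<forall>i\<in>F. dist (\<psi> i) (\<phi> i) < \<epsilon>"
    have "\<psi> i \<in> U i" if "i \<in> I" for i
    proof (cases "i \<in> F")
      case True
      then have "\<psi> i \<in> ball (\<phi> i) (d i)"
        using close \<epsilon>_le[OF True] by (force simp: dist_commute)
      then show ?thesis
        using d[OF True] by blast
    next
      case False
      then show ?thesis
        using that unfolding F_def by blast
    qed
    with \<open>\<psi> \<in> extensional I\<close> have "\<psi> \<in> Pi\<^sub>E I U"
      unfolding PiE_iff by blast
    then show "\<psi> \<in> T"
      using UT by blast
  qed
qed

lemma evaluations_dense_in_characters:
  assumes H: "Cb_ideal X H" and \<phi>: "\<phi> \<in> characters H"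
  shows "\<phi> \<in> subtopology (product_topology (\<lambda>_. euclidean) H) (characters H)
                closure_of ((\<lambda>x. restrict (\<lambda>g. g x) H) ` topspace X)"
  unfolding in_closure_of
proof (intro conjI allI impI)
  show "\<phi> \<in> topspace (subtopology (product_topology (\<lambda>_. euclidean) H) (characters H))"
    using \<phi> by (simp add: characters_def PiE_def)
next
  fix T
  assume "\<phi> \<in> T \<and> openin (subtopology (product_topology (\<lambda>_. euclidean) H) (characters H)) T"
  then obtain T' where T': "openin (product_topology (\<lambda>_. euclidean) H) T'" "\<phi> \<in> T'"
    and T: "T = T' \<inter> characters H"
    by (auto simp: openin_subtopology)
  obtain F \<epsilon> where F: "finite F" "F \<subseteq> H" "\<epsilon> > 0"
    and F_nhd: "\<And>\<psi>. \<psi> \<in> extensional H \<Longrightarrow> \<forall>g\<in>F. dist (\<psi> g) (\<phi> g) < \<epsilon> \<Longrightarrow> \<psi> \<in> T'"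
    using openin_product_euclidean_finite_dist[OF T'] by blast
  obtain x where x: "x \<in> topspace X" "\<forall>g\<in>F. norm (g x - \<phi> g) < \<epsilon>" "\<exists>g\<in>H. g x \<noteq> 0"
    using character_approx_by_point[OF H \<phi> F] by blast
  have "restrict (\<lambda>g. g x) H \<in> T'"
    using F(2) x(2) by (intro F_nhd) (auto simp: dist_norm)
  moreover have "restrict (\<lambda>g. g x) H \<in> characters H"
    using x(3) evaluation_in_characters[OF H] by blast
  ultimately show "\<exists>y. y \<in> (\<lambda>x. restrict (\<lambda>g. g x) H) ` topspace X \<and> y \<in> T"
    using x(1) T by blast
qed

lemma HX_span_add:
  assumes "p \<in> HX_span B X r" and "q \<in> HX_span B X r"
  shows "(\<lambda>x. p x + q x) \<in> HX_span B X r"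
proof -
  obtain n :: nat and g h where gh: "\<forall>i<n. g i \<in> Cb X \<and> h i \<in> C0 B"
    and p: "p = (\<lambda>x. \<Sum>i<n. g i x * h i (r x))"
    using assms(1) unfolding HX_span_def mem_Collect_eq by blast
  obtain m :: nat and g' h' where gh': "\<forall>i<m. g' i \<in> Cb X \<and> h' i \<in> C0 B"
    and q: "q = (\<lambda>x. \<Sum>i<m. g' i x * h' i (r x))"
    using assms(2) unfolding HX_span_def mem_Collect_eq by blast
  define G where "G i = (if i < n then g i else g' (i - n))" for i
  define K where "K i = (if i < n then h i else h' (i - n))" for i
  have "\<forall>i<n + m. G i \<in> Cb X \<and> K i \<in> C0 B"
    using gh gh' by (auto simp: G_def K_def)
  moreover have "(\<lambda>x. p x + q x) = (\<lambda>x. \<Sum>i<n + m. G i x * K i (r x))"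
    by (simp add: p q sum_lessThan_add G_def K_def)
  ultimately show ?thesis
    unfolding HX_span_def mem_Collect_eq by (intro exI[of _ "n + m"] exI[of _ G] exI[of _ K] conjI)
qed

lemma HX_span_mult_Cb:
  assumes "p \<in> HX_span B X r" and "k \<in> Cb X"
  shows "(\<lambda>x. p x * k x) \<in> HX_span B X r"
proof -
  obtain n :: nat and g h where gh: "\<forall>i<n. g i \<in> Cb X \<and> h i \<in> C0 B"
    and p: "p = (\<lambda>x. \<Sum>i<n. g i x * h i (r x))"
    using assms(1) unfolding HX_span_def mem_Collect_eq by blast
  have "\<forall>i<n. (\<lambda>x. g i x * k x) \<in> Cb X \<and> h i \<in> C0 B"
    using gh assms(2) Cb_mult by blast
  moreover have "(\<lambda>x. p x * k x) = (\<lambda>x. \<Sum>i<n. (g i x * k x) * h i (r x))"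
    unfolding p sum_distrib_right by (simp add: mult_ac)
  ultimately show ?thesis
    unfolding HX_span_def mem_Collect_eq
    by (intro exI[of _ n] exI[of _ "\<lambda>i x. g i x * k x"] exI[of _ h] conjI)
qed

lemma HX_approx:
  "g \<in> HX B X r \<Longrightarrow> e > 0 \<Longrightarrow> \<exists>p\<in>HX_span B X r. \<forall>x\<in>topspace X. norm (g x - p x) < e"
  unfolding HX_def by blast

lemma HX_add:
  assumes g: "g \<in> HX B X r" and k: "k \<in> HX B X r"
  shows "(\<lambda>x. g x + k x) \<in> HX B X r"
proof -
  have "\<exists>p\<in>HX_span B X r. \<forall>x\<in>topspace X. norm (g x + k x - p x) < e" if "e > 0" for e
  proof -
    obtain p q where p: "p \<in> HX_span B X r" "\<forall>x\<in>topspace X. norm (g x - p x) < e/2"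
      and q: "q \<in> HX_span B X r" "\<forall>x\<in>topspace X. norm (k x - q x) < e/2"
      using HX_approx[OF g, of "e/2"] HX_approx[OF k, of "e/2"] \<open>e > 0\<close> by auto
    have "norm (g x + k x - (p x + q x)) < e" if "x \<in> topspace X" for x
    proof -
      have "norm (g x + k x - (p x + q x)) \<le> norm (g x - p x) + norm (k x - q x)"
        by (metis add_diff_add norm_triangle_ineq)
      then show ?thesis
        using p(2) q(2) that by fastforce
    qed
    then show ?thesis
      by (intro bexI[OF _ HX_span_add[OF p(1) q(1)]]) simp
  qed
  moreover have "(\<lambda>x. g x + k x) \<in> Cb X"
    using g k by (simp add: HX_def Cb_add)
  ultimately show ?thesis
    unfolding HX_def by blast
qed

lemma HX_mult_Cb:
  assumes g: "g \<in> HX B X r" and k: "k \<in> Cb X"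
  shows "(\<lambda>x. g x * k x) \<in> HX B X r"
proof -
  obtain M where M: "M > 0" "\<And>x. norm (k x) \<le> M"
    using Cb_bounded[OF k] by blast
  have "\<exists>p\<in>HX_span B X r. \<forall>x\<in>topspace X. norm (g x * k x - p x) < e" if "e > 0" for e
  proof -
    obtain p where p: "p \<in> HX_span B X r" "\<forall>x\<in>topspace X. norm (g x - p x) < e / M"
      using HX_approx[OF g, of "e / M"] \<open>e > 0\<close> M(1) by auto
    have "norm (g x * k x - p x * k x) < e" if "x \<in> topspace X" for x
    proof -
      have "norm (g x * k x - p x * k x) = norm (g x - p x) * norm (k x)"
        by (simp add: norm_mult flip: left_diff_distrib)
      also have "\<dots> \<le> norm (g x - p x) * M"
        using M(2) by (simp add: mult_left_mono)
      also have "\<dots> < e"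
        using p(2) that M(1) by (simp add: pos_less_divide_eq)
      finally show ?thesis .
    qed
    then show ?thesis
      by (intro bexI[OF _ HX_span_mult_Cb[OF p(1) k]]) simp
  qed
  moreover have "(\<lambda>x. g x * k x) \<in> Cb X"
    using g k by (simp add: HX_def Cb_mult)
  ultimately show ?thesis
    unfolding HX_def by blast
qed

lemma Cb_ideal_HX: "Cb_ideal X (HX B X r)"
  unfolding Cb_ideal_def
proof (intro conjI ballI)
  show "HX B X r \<subseteq> Cb X"
    unfolding HX_def by blast
next
  fix g k assume "g \<in> HX B X r" and "k \<in> HX B X r"
  then show "(\<lambda>x. g x + k x) \<in> HX B X r"
    by (rule HX_add)
next
  fix g k assume "g \<in> HX B X r" and "k \<in> Cb X"
  then show "(\<lambda>x. g x * k x) \<in> HX B X r"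
    by (rule HX_mult_Cb)
qed

lemma beta_i_dense: "betaB B X r closure_of (beta_i B X r ` topspace X) = topspace (betaB B X r)"
proof (rule antisym[OF closure_of_subset_topspace subsetI])
  fix \<phi> assume "\<phi> \<in> topspace (betaB B X r)"
  then have "\<phi> \<in> characters (HX B X r)"
    by (simp add: betaB_def)
  then show "\<phi> \<in> betaB B X r closure_of (beta_i B X r ` topspace X)"
    using evaluations_dense_in_characters[OF Cb_ideal_HX]
    by (simp add: betaB_def beta_i_def[abs_def])
qed

theorem proposition4p10:
  fixes B :: "'b topology" and X :: "'a topology" and X' :: "'c topology"
    and r :: "'a \<Rightarrow> 'b" and r' :: "'c \<Rightarrow> 'b" and f :: "'a \<Rightarrow> 'c"
    and f' :: "(('a \<Rightarrow> complex) \<Rightarrow> complex) \<Rightarrow> 'c"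
    and betar :: "(('a \<Rightarrow> complex) \<Rightarrow> complex) \<Rightarrow> 'b"
  assumes "locally_compact_space B" and "Hausdorff_space B"
    and "continuous_map X B r"
    and "continuous_map X' B r'" and "Hausdorff_space X'" and "proper_map X' B r'"
    and "continuous_map X X' f" and "\<forall>x\<in>topspace X. r' (f x) = r x"
    and "continuous_map (betaB B X r) X' f'"
    and "\<forall>x\<in>topspace X. f' (beta_i B X r x) = f x"
    and "continuous_map (betaB B X r) B betar"
    and "\<forall>x\<in>topspace X. betar (beta_i B X r x) = r x"
  shows "\<forall>\<phi>\<in>topspace (betaB B X r). r' (f' \<phi>) = betar \<phi>"
proof
  fix \<phi> assume "\<phi> \<in> topspace (betaB B X r)"
  then have "\<phi> \<in> betaB B X r closure_of (beta_i B X r ` topspace X)"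
    by (simp add: beta_i_dense)
  moreover have "(r' \<circ> f') \<psi> = betar \<psi>" if "\<psi> \<in> beta_i B X r ` topspace X" for \<psi>
    using that assms(8,10,12) by auto
  ultimately have "(r' \<circ> f') \<phi> = betar \<phi>"
    by (rule forall_in_closure_of_eq[OF _ assms(2) continuous_map_compose[OF assms(9,4)] assms(11)])
  then show "r' (f' \<phi>) = betar \<phi>"
    by simp
qed

end
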